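(* Let $\mathcal{B}_4$, $\pi_{\lambda,\mu}$ ($\lambda\neq0,\mu\in\mathbb{R}$), the group Fourier transform and the difference operators $\Delta_{x_i}$ be as in the context. Then for a suitable distribution $\kappa$ on $\mathcal{B}_4$ (e.g. $\kappa\in\mathcal{S}(\mathbb{R}^4)$), for $h$ (e.g. in $\mathcal{S}(\mathbb{R})$) and $u\in\mathbb{R}$, $$\begin{aligned}(\Delta_{x_4}\pi_{\lambda,\mu}(\kappa))h(u)={}& i\,\partial_\lambda\{\pi_{\lambda,\mu}(\kappa)h(u)\}-\Big(\frac{\mu}{2\lambda^2}+\frac{u^2}{2}\Big)\{\Delta_{x_2}\pi_{\lambda,\mu}(\kappa)h(u)\}+u\{\Delta_{x_3}\pi_{\lambda,\mu}(\kappa)h(u)\}\\&-\{\Delta_{x_3}\Delta_{x_1}\pi_{\lambda,\mu}(\kappa)h(u)\}+u\{\Delta_{x_2}\Delta_{x_1}\pi_{\lambda,\mu}(\kappa)h(u)\}-\frac12\{\Delta_{x_2}\Delta_{x_1}^2\pi_{\lambda,\mu}(\kappa)h(u)\}.\end{aligned}$$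
   Context: The Engel group $\mathcal{B}_4$ is $\mathbb{R}^4$ with the law $(x_1,x_2,x_3,x_4)\circ(y_1,y_2,y_3,y_4)=(x_1+y_1,x_2+y_2,x_3+y_3-x_1y_2,x_4+y_4+\frac12x_1^2y_2-x_1y_3)$ and Haar measure the Lebesgue measure. For $\lambda\neq0$, $\mu\in\mathbb{R}$, $\pi_{\lambda,\mu}(x)h(u)=\exp\big(i(-\frac{\mu}{2\lambda}x_2+\lambda x_4-\lambda x_3u+\frac{\lambda}{2}x_2u^2)\big)h(u+x_1)$ on $L^2(\mathbb{R})$. The group Fourier transform is $\hat\kappa(\pi_{\lambda,\mu})=\pi_{\lambda,\mu}(\kappa)=\int_{\mathcal{B}_4}\kappa(x)\pi_{\lambda,\mu}(x)^*dx$; explicitly $\pi_{\lambda,\mu}(\kappa)h(u)=\int_{\mathbb{R}^4}\kappa(x)\exp\big(i(\frac{\mu}{2\lambda}x_2-\lambda x_4+\lambda x_3(u-x_1)-\frac{\lambda}{2}x_2(u-x_1)^2)\big)h(u-x_1)\,dx$. The difference operators are defined by $\Delta_{x_i}\hat\kappa(\pi_{\lambda,\mu}):=\pi_{\lambda,\mu}(x_i\kappa)$, $i=1,\dots,4$, where $x_i\kappa$ is $\kappa$ multiplied by the coordinate $x_i$; compositions act as $\Delta_{x_i}\Delta_{x_j}\pi_{\lambda,\mu}(\kappa)=\pi_{\lambda,\mu}(x_ix_j\kappa)$ and $\Delta_{x_1}^2\pi_{\lambda,\mu}(\kappa)=\pi_{\lambda,\mu}(x_1^2\kappa)$. $\partial_\lambda\{\pi_{\lambda,\mu}(\kappa)h(u)\}$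 is the derivative with respect to the parameter $\lambda$ of the function $\pi_{\lambda,\mu}(\kappa)h(u)$, and the factors $u$, $u^2$ act by multiplication after applying the operators. *)

theory Defs
  imports "HOL-Analysis.Analysis"
begin

fun dirderiv :: "'a::real_normed_vector list \<Rightarrow> ('a \<Rightarrow> 'b::real_normed_vector) \<Rightarrow> 'a \<Rightarrow> 'b" where
  "dirderiv [] f = f"
| "dirderiv (v # vs) f = (\<lambda>x. frechet_derivative (dirderiv vs f) (at x) v)"

definition schwartz :: "('a::real_normed_vector \<Rightarrow> 'b::real_normed_vector) \<Rightarrow> bool" where
  "schwartz f \<longleftrightarrow>
     (\<forall>vs. (\<forall>x. dirderiv vs f differentiable (at x)) \<and>
           (\<forall>N::nat. bounded (range (\<lambda>x. ((1 + norm x) ^ N) *\<^sub>R dirderiv vs f x))))"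

text \<open>Points of B_4 = R^4 are represented as (x1,x2,x3,x4); Haar measure = lborel.
  piF lam mu kappa h u is pi_{lam,mu}(kappa) h (u), written out explicitly.\<close>
definition piF :: "real \<Rightarrow> real \<Rightarrow> (real \<times> real \<times> real \<times> real \<Rightarrow> complex)
                    \<Rightarrow> (real \<Rightarrow> complex) \<Rightarrow> real \<Rightarrow> complex" where
  "piF lam mu kappa h u =
     (LINT x|lborel. (case x of (x1, x2, x3, x4) \<Rightarrow>
        kappa x * exp (\<i> * complex_of_real (mu / (2 * lam) * x2 - lam * x4
              + lam * x3 * (u - x1) - lam / 2 * x2 * (u - x1)^2)) * h (u - x1)))"

definition c1 :: "real \<times> real \<times> real \<times> real \<Rightarrow> real" where "c1 x = fst x"
definition c2 :: "real \<times> real \<times> real \<times> real \<Rightarrow> real" where "c2 x = fst (snd x)"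
definition c3 :: "real \<times> real \<times> real \<times> real \<Rightarrow> real" where "c3 x = fst (snd (snd x))"
definition c4 :: "real \<times> real \<times> real \<times> real \<Rightarrow> real" where "c4 x = snd (snd (snd x))"

end

theory Submission
  imports Defs "HOL-Probability.Sinc_Integral" "HOL-Probability.Characteristic_Functions"
begin

(* Write pi(kappa) h (u) as the integral of kappa(x) exp(i phi_lam(x)) h(u - x1) with phase
   phi_lam(x) = mu/(2 lam) x2 - lam x4 + lam x3 (u - x1) - lam/2 x2 (u - x1)^2.  Its lam-derivative
   is a cubic polynomial in x whose coefficients stay bounded for |l - lam| < |lam|/2, and a
   polynomial times a Schwartz function is integrable, so dominated convergence of the difference
   quotients allows differentiation under the integral sign.  Multiplying by i and expanding
   (u - x1)^2 splits the derivative into the moments pi(x^a kappa) of the statement. *)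

lemma has_vector_derivative_iff_difference_quotient:
  fixes F :: "real \<Rightarrow> 'b::real_normed_vector"
  shows "(F has_vector_derivative D) (at a) \<longleftrightarrow> ((\<lambda>y. (F y - F a) /\<^sub>R (y - a)) \<longlongrightarrow> D) (at a)"
proof -
  have "F y - F a - (y - a) *\<^sub>R D = (y - a) *\<^sub>R ((F y - F a) /\<^sub>R (y - a) - D)" if "y \<noteq> a" for y
    using that by (simp add: scaleR_right_diff_distrib)
  then have "\<forall>\<^sub>F y in at a. norm (F y - F a - (y - a) *\<^sub>R D) / norm (y - a) = norm ((F y - F a) /\<^sub>R (y - a) - D)"
    unfolding eventually_at_filter by (intro always_eventually) simp
  then have "(F has_vector_derivative D) (at a) \<longleftrightarrow> ((\<lambda>y. norm ((F y - F a) /\<^sub>R (y - a) - D)) \<longlongrightarrow> 0) (at a)"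
    unfolding has_vector_derivative_def has_derivative_iff_norm
    by (simp add: bounded_linear_scaleR_left tendsto_cong)
  then show ?thesis
    by (simp add: tendsto_norm_zero_iff LIM_zero_iff)
qed

lemma integral_dominated_convergence_at:
  fixes s :: "'c::first_countable_topology \<Rightarrow> 'a \<Rightarrow> 'b::{banach, second_countable_topology}"
  assumes "f \<in> borel_measurable M" "\<And>t. s t \<in> borel_measurable M" "integrable M w"
    and lim: "AE x in M. ((\<lambda>t. s t x) \<longlongrightarrow> f x) (at a within S)"
    and bound: "\<forall>\<^sub>F t in at a within S. AE x in M. norm (s t x) \<le> w x"
  shows "((\<lambda>t. integral\<^sup>L M (s t)) \<longlongrightarrow> integral\<^sup>L M f) (at a within S)"
proof (subst tendsto_at_iff_sequentially, intro allI impI)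
  fix X :: "nat \<Rightarrow> 'c"
  assume "\<forall>i. X i \<in> S - {a}" and "X \<longlonglongrightarrow> a"
  then have X: "filterlim X (at a within S) sequentially"
    by (simp add: filterlim_at)
  from filterlim_iff[THEN iffD1, OF X, rule_format, OF bound]
  obtain N where w: "\<And>n. N \<le> n \<Longrightarrow> AE x in M. norm (s (X n) x) \<le> w x"
    by (auto simp: eventually_sequentially)
  show "((\<lambda>t. integral\<^sup>L M (s t)) \<circ> X) \<longlonglongrightarrow> integral\<^sup>L M f"
    unfolding comp_def
  proof (rule LIMSEQ_offset, rule integral_dominated_convergence)
    show "AE x in M. norm (s (X (n + N)) x) \<le> w x" for n
      by (rule w) auto
    show "AE x in M. (\<lambda>n. s (X (n + N)) x) \<longlonglongrightarrow> f x"
      using lim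
    proof eventually_elim
      fix x assume "((\<lambda>t. s t x) \<longlongrightarrow> f x) (at a within S)"
      then show "(\<lambda>n. s (X (n + N)) x) \<longlonglongrightarrow> f x"
        by (intro LIMSEQ_ignore_initial_segment filterlim_compose[OF _ X])
    qed
  qed (use assms in auto)
qed

lemma norm_diff_le_of_vector_derivative_bound:
  fixes F :: "real \<Rightarrow> 'b::real_normed_vector"
  assumes der: "\<And>k. \<bar>k - a\<bar> < r \<Longrightarrow> (F has_vector_derivative F' k) (at k)"
    and bound: "\<And>k. \<bar>k - a\<bar> < r \<Longrightarrow> norm (F' k) \<le> B"
    and l: "\<bar>l - a\<bar> < r"
  shows "norm (F l - F a) \<le> B * \<bar>l - a\<bar>"
proof -
  have ball: "k \<in> ball a r \<longleftrightarrow> \<bar>k - a\<bar> < r" for k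
    by (simp add: dist_real_def abs_minus_commute)
  have derF: "(F has_derivative (\<lambda>t. t *\<^sub>R F' k)) (at k within ball a r)" if "k \<in> ball a r" for k
    using der that unfolding ball has_vector_derivative_def
    by (blast intro: has_derivative_at_withinI)
  have onorm: "onorm (\<lambda>t. t *\<^sub>R F' k) \<le> B" if "k \<in> ball a r" for k
    using bound that unfolding ball
    by (simp add: onorm_scaleR_left onorm_id)
  have "l \<in> ball a r" "a \<in> ball a r"
    using l unfolding ball by simp_all
  from differentiable_bound[OF convex_ball derF onorm this] show ?thesis
    by simp
qed

lemma has_vector_derivative_integral:
  fixes f :: "real \<Rightarrow> 'a \<Rightarrow> 'b::{banach, second_countable_topology}"
  assumes "r > 0"
    and meas: "\<And>l. f l \<in> borel_measurable M" and "f' lam \<in> borel_measurable M"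
    and int: "integrable M (f lam)" and "integrable M G"
    and der: "\<And>l x. \<bar>l - lam\<bar> < r \<Longrightarrow> x \<in> space M \<Longrightarrow>
      ((\<lambda>l. f l x) has_vector_derivative f' l x) (at l)"
    and bound: "\<And>l x. \<bar>l - lam\<bar> < r \<Longrightarrow> x \<in> space M \<Longrightarrow> norm (f' l x) \<le> G x"
  shows "((\<lambda>l. \<integral>x. f l x \<partial>M) has_vector_derivative (\<integral>x. f' lam x \<partial>M)) (at lam)"
proof -
  have lipschitz: "norm (f l x - f lam x) \<le> G x * \<bar>l - lam\<bar>"
    if "\<bar>l - lam\<bar> < r" and "x \<in> space M" for l x
    using der bound that by (intro norm_diff_le_of_vector_derivative_bound)
  have int_l: "integrable M (f l)" if "\<bar>l - lam\<bar> < r" for l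
  proof -
    have "integrable M (\<lambda>x. f l x - f lam x)"
    proof (rule Bochner_Integration.integrable_bound)
      show "integrable M (\<lambda>x. G x * \<bar>l - lam\<bar>)"
        using \<open>integrable M G\<close> by simp
      show "(\<lambda>x. f l x - f lam x) \<in> borel_measurable M"
        using meas by measurable
      show "AE x in M. norm (f l x - f lam x) \<le> norm (G x * \<bar>l - lam\<bar>)"
        using lipschitz[OF that] by (intro AE_I2) (smt (verit) real_norm_def)
    qed
    from Bochner_Integration.integrable_add[OF this int] show ?thesis by simp
  qed
  define q where "q l x = (f l x - f lam x) /\<^sub>R (l - lam)" for l x
  have near: "\<forall>\<^sub>F l in at lam. \<bar>l - lam\<bar> < r \<and> l \<noteq> lam"
    using \<open>r > 0\<close> unfolding eventually_at dist_real_def by blast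
  have "((\<lambda>l. \<integral>x. q l x \<partial>M) \<longlongrightarrow> (\<integral>x. f' lam x \<partial>M)) (at lam)"
  proof (rule integral_dominated_convergence_at[where w=G])
    show "q l \<in> borel_measurable M" for l
      unfolding q_def using meas by measurable
    show "AE x in M. ((\<lambda>l. q l x) \<longlongrightarrow> f' lam x) (at lam)"
      using der[of lam] \<open>r > 0\<close> unfolding q_def has_vector_derivative_iff_difference_quotient
      by (intro AE_I2) simp
    show "\<forall>\<^sub>F l in at lam. AE x in M. norm (q l x) \<le> G x"
      using near
    proof eventually_elim
      case (elim l)
      show ?case
      proof (rule AE_I2)
        fix x assume "x \<in> space M"
        with elim lipschitz have "norm (f l x - f lam x) / \<bar>l - lam\<bar> \<le> G x"
          by (simp add: pos_divide_le_eq)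
        then show "norm (q l x) \<le> G x"
          by (simp add: q_def divide_inverse_commute)
      qed
    qed
  qed fact+
  moreover have "\<forall>\<^sub>F l in at lam. (\<integral>x. q l x \<partial>M) = ((\<integral>x. f l x \<partial>M) - (\<integral>x. f lam x \<partial>M)) /\<^sub>R (l - lam)"
    using near by eventually_elim (simp add: q_def int_l int)
  ultimately show ?thesis
    unfolding has_vector_derivative_iff_difference_quotient
    by (rule Lim_transform_eventually)
qed

type_synonym R4 = "real \<times> real \<times> real \<times> real"

lemma integrable_lborel_mult_fst_snd:
  fixes f :: "'a::euclidean_space \<Rightarrow> real" and g :: "'b::euclidean_space \<Rightarrow> real"
  assumes f: "integrable lborel f" and g: "integrable lborel g"
  shows "integrable lborel (\<lambda>z. f (fst z) * g (snd z))"
proof -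
  have [measurable]: "f \<in> borel_measurable borel" "g \<in> borel_measurable borel"
    using f g by auto
  have "integrable (lborel \<Otimes>\<^sub>M lborel) (\<lambda>z::'a \<times> 'b. f (fst z) * g (snd z))"
  proof (rule lborel_pair.Fubini_integrable)
    have "(\<lambda>x. \<integral>y. norm (f x * g y) \<partial>lborel) = (\<lambda>x. norm (f x) * (\<integral>y. norm (g y) \<partial>lborel))"
      by (simp add: abs_mult)
    then show "integrable lborel (\<lambda>x. \<integral>y. norm (f (fst (x, y)) * g (snd (x, y))) \<partial>lborel)"
      using f by simp
  qed (use g in simp_all)
  then show ?thesis
    by (simp add: lborel_prod)
qed

lemma abs_coord_le_norm:
  fixes x :: R4
  shows "\<bar>c1 x\<bar> \<le> norm x" "\<bar>c2 x\<bar> \<le> norm x" "\<bar>c3 x\<bar> \<le> norm x" "\<bar>c4 x\<bar> \<le> norm x"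
proof -
  obtain a b c d where x: "x = (a, b, c, d)"
    by (cases x) auto
  have bcd: "norm (b, c, d) \<le> norm x"
    unfolding x by (rule norm_snd_le)
  have cd: "norm (c, d) \<le> norm x"
    using norm_snd_le[of "(c, d)" b] bcd by linarith
  show "\<bar>c1 x\<bar> \<le> norm x"
    using norm_fst_le[of a "(b, c, d)"] unfolding c1_def x by simp
  show "\<bar>c2 x\<bar> \<le> norm x"
    using norm_fst_le[of b "(c, d)"] bcd unfolding c2_def x by simp
  show "\<bar>c3 x\<bar> \<le> norm x"
    using norm_fst_le[of c d] cd unfolding c3_def x by simp
  show "\<bar>c4 x\<bar> \<le> norm x"
    using norm_snd_le[of d c] cd unfolding c4_def x by simp
qed

lemma coord_measurable [measurable]:
  "c1 \<in> borel_measurable borel" "c2 \<in> borel_measurable borel"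
  "c3 \<in> borel_measurable borel" "c4 \<in> borel_measurable borel"
  unfolding c1_def[abs_def] c2_def[abs_def] c3_def[abs_def] c4_def[abs_def]
  by (intro borel_measurable_continuous_onI continuous_intros)+

definition decay_weight :: "R4 \<Rightarrow> real" where
  "decay_weight x = inverse ((1 + (c1 x)\<^sup>2) * (1 + (c2 x)\<^sup>2) * (1 + (c3 x)\<^sup>2) * (1 + (c4 x)\<^sup>2))"

lemma integrable_decay_weight: "integrable lborel decay_weight"
proof -
  have i: "integrable lborel (\<lambda>t::real. inverse (1 + t\<^sup>2))"
    using integrable_inverse_1_plus_square unfolding set_integrable_def by simp
  note prod = integrable_lborel_mult_fst_snd
  show ?thesis
    using prod[OF i prod[OF i prod[OF i i]]]
    unfolding decay_weight_def[abs_def] c1_def c2_def c3_def c4_def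
    by (simp add: inverse_mult_distrib mult_ac)
qed

lemma inverse_power_le_decay_weight: "inverse ((1 + norm x) ^ 8) \<le> decay_weight x"
proof -
  have le: "1 + t\<^sup>2 \<le> (1 + norm x)\<^sup>2" if "\<bar>t\<bar> \<le> norm x" for t
  proof -
    have "t\<^sup>2 \<le> (norm x)\<^sup>2"
      using that by (metis abs_le_square_iff abs_norm_cancel)
    then show ?thesis
      by (simp add: power2_sum) (use norm_ge_zero[of x] in linarith)
  qed
  have "(1 + (c1 x)\<^sup>2) * (1 + (c2 x)\<^sup>2) * (1 + (c3 x)\<^sup>2) * (1 + (c4 x)\<^sup>2)
      \<le> (1 + norm x)\<^sup>2 * (1 + norm x)\<^sup>2 * (1 + norm x)\<^sup>2 * (1 + norm x)\<^sup>2"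
    using le abs_coord_le_norm[of x] by (intro mult_mono) (auto intro: add_nonneg_nonneg)
  also have "\<dots> = (1 + norm x) ^ 8"
    by (simp flip: power_add)
  finally show ?thesis
    unfolding decay_weight_def
    by (intro le_imp_inverse_le) (simp_all add: add_pos_nonneg)
qed

lemma integrableI_R4_decay:
  fixes f :: "R4 \<Rightarrow> 'b::{banach, second_countable_topology}"
  assumes "f \<in> borel_measurable lborel" and B: "\<And>x. (1 + norm x) ^ 8 * norm (f x) \<le> B"
  shows "integrable lborel f"
proof (rule Bochner_Integration.integrable_bound)
  show "integrable lborel (\<lambda>x. B * decay_weight x)"
    using integrable_decay_weight by simp
  show "AE x in lborel. norm (f x) \<le> norm (B * decay_weight x)"
  proof (rule AE_I2)
    fix x :: R4
    have pos: "0 < (1 + norm x) ^ 8"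
      using norm_ge_zero[of x] by (intro zero_less_power) linarith
    then have "norm (f x) \<le> B * inverse ((1 + norm x) ^ 8)"
      using B[of x] by (simp add: pos_le_divide_eq mult.commute flip: divide_inverse)
    also have "\<dots> \<le> B * decay_weight x"
      using inverse_power_le_decay_weight[of x] B[of x] pos
      by (intro mult_left_mono) (auto intro: order_trans[rotated])
    finally show "norm (f x) \<le> norm (B * decay_weight x)"
      by simp
  qed
qed fact

lemma schwartz_continuous: "schwartz f \<Longrightarrow> continuous_on UNIV f"
  unfolding schwartz_def
  by (metis dirderiv.simps(1) continuous_at_imp_continuous_on differentiable_imp_continuous_within)

lemma schwartz_measurable: "schwartz f \<Longrightarrow> f \<in> borel_measurable borel"
  by (rule borel_measurable_continuous_onI[OF schwartz_continuous])

lemma schwartz_decay: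
  assumes "schwartz f"
  obtains B where "\<And>x. (1 + norm x) ^ N * norm (f x) \<le> B"
proof -
  have "bounded (range (\<lambda>x. ((1 + norm x) ^ N) *\<^sub>R f x))"
    using assms unfolding schwartz_def by (metis dirderiv.simps(1))
  then obtain B where "\<And>x. norm (((1 + norm x) ^ N) *\<^sub>R f x) \<le> B"
    unfolding bounded_iff by auto
  then show ?thesis
    by (intro that) (simp add: add_nonneg_nonneg)
qed

lemma integrableI_schwartz_dominated:
  fixes kappa :: "R4 \<Rightarrow> 'b::real_normed_vector" and g :: "R4 \<Rightarrow> 'c::{banach, second_countable_topology}"
  assumes "schwartz kappa" and "g \<in> borel_measurable lborel"
    and g: "\<And>x. norm (g x) \<le> C * (1 + norm x) ^ k * norm (kappa x)"
  shows "integrable lborel g"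
proof -
  obtain B where B: "\<And>x. (1 + norm x) ^ (8 + k) * norm (kappa x) \<le> B"
    using schwartz_decay[OF \<open>schwartz kappa\<close>] by blast
  show ?thesis
  proof (rule integrableI_R4_decay)
    fix x :: R4
    have "(1 + norm x) ^ 8 * norm (g x) \<le> (1 + norm x) ^ 8 * (C * (1 + norm x) ^ k * norm (kappa x))"
      using g[of x] by (intro mult_left_mono) auto
    also have "\<dots> = C * ((1 + norm x) ^ (8 + k) * norm (kappa x))"
      by (simp add: power_add)
    also have "\<dots> \<le> \<bar>C\<bar> * ((1 + norm x) ^ (8 + k) * norm (kappa x))"
      by (intro mult_right_mono) auto
    also have "\<dots> \<le> \<bar>C\<bar> * B"
      using B[of x] by (intro mult_left_mono) auto
    finally show "(1 + norm x) ^ 8 * norm (g x) \<le> \<bar>C\<bar> * B" .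
  qed fact
qed

definition pi_phase :: "real \<Rightarrow> real \<Rightarrow> real \<Rightarrow> R4 \<Rightarrow> real" where
  "pi_phase lam mu u x =
     mu / (2 * lam) * c2 x - lam * c4 x + lam * c3 x * (u - c1 x) - lam / 2 * c2 x * (u - c1 x)\<^sup>2"

definition pi_phase_deriv :: "real \<Rightarrow> real \<Rightarrow> real \<Rightarrow> R4 \<Rightarrow> real" where
  "pi_phase_deriv lam mu u x =
     - mu / (2 * lam\<^sup>2) * c2 x - c4 x + c3 x * (u - c1 x) - c2 x * (u - c1 x)\<^sup>2 / 2"

definition pi_kernel :: "real \<Rightarrow> real \<Rightarrow> (real \<Rightarrow> complex) \<Rightarrow> real \<Rightarrow> R4 \<Rightarrow> complex" where
  "pi_kernel lam mu h u x = iexp (pi_phase lam mu u x) * h (u - c1 x)"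

lemma piF_eq_integral_pi_kernel:
  "piF lam mu kappa h u = (\<integral>x. kappa x * pi_kernel lam mu h u x \<partial>lborel)"
  unfolding piF_def pi_kernel_def pi_phase_def
  by (intro Bochner_Integration.integral_cong)
    (auto simp: c1_def c2_def c3_def c4_def mult.assoc split: prod.splits)

lemma pi_kernel_measurable [measurable]:
  assumes [measurable]: "h \<in> borel_measurable borel"
  shows "pi_kernel lam mu h u \<in> borel_measurable borel"
  unfolding pi_kernel_def[abs_def] pi_phase_def by measurable

lemma norm_pi_kernel: "norm (pi_kernel lam mu h u x) = norm (h (u - c1 x))"
  by (simp add: pi_kernel_def norm_mult)

lemma has_vector_derivative_pi_kernel:
  assumes "lam \<noteq> 0"
  shows "((\<lambda>l. pi_kernel l mu h u x) has_vector_derivative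
           \<i> * pi_phase_deriv lam mu u x * pi_kernel lam mu h u x) (at lam)"
proof -
  have "((\<lambda>l. pi_phase l mu u x) has_real_derivative pi_phase_deriv lam mu u x) (at lam)"
    unfolding pi_phase_def pi_phase_deriv_def using assms
    by (auto intro!: derivative_eq_intros simp: field_simps power2_eq_square)
  then have "((iexp \<circ> (\<lambda>l. pi_phase l mu u x)) has_vector_derivative
      pi_phase_deriv lam mu u x *\<^sub>R (\<i> * iexp (pi_phase lam mu u x))) (at lam)"
    by (intro vector_diff_chain_at has_vector_derivative_iexp)
      (simp add: has_real_derivative_iff_has_vector_derivative)
  from has_vector_derivative_mult_left[OF this, of "h (u - c1 x)"] show ?thesis
    by (simp add: pi_kernel_def comp_def scaleR_conv_of_real mult_ac)
qed

lemma abs_pi_phase_deriv_le: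
  "\<bar>pi_phase_deriv l mu u x\<bar> \<le> (\<bar>mu\<bar> / (2 * l\<^sup>2) + 3 * (1 + \<bar>u\<bar>)\<^sup>2) * (1 + norm x) ^ 3"
proof -
  define n where "n = 1 + norm x"
  define t where "t = 1 + \<bar>u\<bar>"
  have n1: "1 \<le> n" and t1: "1 \<le> t"
    by (simp_all add: n_def t_def)
  have coord: "\<bar>c1 x\<bar> \<le> n" "\<bar>c2 x\<bar> \<le> n" "\<bar>c3 x\<bar> \<le> n" "\<bar>c4 x\<bar> \<le> n"
    using abs_coord_le_norm[of x] by (simp_all add: n_def)
  have "\<bar>u\<bar> \<le> \<bar>u\<bar> * n"
    using n1 by (simp add: mult_le_cancel_left1)
  then have uc: "\<bar>u - c1 x\<bar> \<le> t * n"
    using coord(1) by (simp add: t_def distrib_right)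
  have n3: "n \<le> n ^ 3" "n\<^sup>2 \<le> n ^ 3"
    using power_increasing[of 1 3 n] power_increasing[of 2 3 n] n1 by simp_all
  have t2: "t \<le> t\<^sup>2" "1 \<le> t\<^sup>2"
    using t1 power_increasing[of 1 2 t] by simp_all
  have "\<bar>mu / (2 * l\<^sup>2) * c2 x\<bar> \<le> \<bar>mu\<bar> / (2 * l\<^sup>2) * n ^ 3"
  proof -
    have "\<bar>c2 x\<bar> \<le> n ^ 3"
      using coord(2) n3(1) by linarith
    then have "\<bar>mu / (2 * l\<^sup>2)\<bar> * \<bar>c2 x\<bar> \<le> \<bar>mu / (2 * l\<^sup>2)\<bar> * n ^ 3"
      by (rule mult_left_mono) simp
    then show ?thesis
      by (simp add: abs_mult)
  qed
  moreover have "\<bar>c4 x\<bar> \<le> t\<^sup>2 * n ^ 3"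
    using coord(4) n1 n3(1) t2(2) mult_mono[of 1 "t\<^sup>2" n "n ^ 3"] by simp
  moreover have "\<bar>c3 x * (u - c1 x)\<bar> \<le> t\<^sup>2 * n ^ 3"
  proof -
    have "\<bar>c3 x * (u - c1 x)\<bar> \<le> n * (t * n)"
      unfolding abs_mult using coord(3) uc by (intro mult_mono) auto
    also have "\<dots> = t * n\<^sup>2"
      by (simp add: power2_eq_square)
    also have "\<dots> \<le> t\<^sup>2 * n ^ 3"
      using t1 t2 n1 n3 by (intro mult_mono) auto
    finally show ?thesis .
  qed
  moreover have "\<bar>c2 x * (u - c1 x)\<^sup>2 / 2\<bar> \<le> t\<^sup>2 * n ^ 3"
  proof -
    have "(u - c1 x)\<^sup>2 \<le> (t * n)\<^sup>2"
      using uc by (metis abs_le_square_iff abs_of_nonneg mult_nonneg_nonneg n1 t1 zero_le_one order_trans)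
    then have "\<bar>c2 x * (u - c1 x)\<^sup>2\<bar> \<le> n * (t * n)\<^sup>2"
      unfolding abs_mult using coord(2) by (intro mult_mono) auto
    also have "\<dots> = t\<^sup>2 * n ^ 3"
      by (simp add: power2_eq_square power3_eq_cube)
    finally show ?thesis
      using t1 n1 by simp
  qed
  ultimately show ?thesis
    unfolding pi_phase_deriv_def n_def[symmetric] t_def[symmetric] distrib_right
    by linarith
qed

lemma abs_pi_phase_deriv_le_near:
  assumes "lam \<noteq> 0" and l: "\<bar>l - lam\<bar> < \<bar>lam\<bar> / 2"
  shows "\<bar>pi_phase_deriv l mu u x\<bar> \<le> (2 * \<bar>mu\<bar> / lam\<^sup>2 + 3 * (1 + \<bar>u\<bar>)\<^sup>2) * (1 + norm x) ^ 3"
proof -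
  have "l \<noteq> 0" and "\<bar>lam\<bar> \<le> \<bar>2 * l\<bar>"
    using l by arith+
  then have "1 / (2 * l\<^sup>2) \<le> 2 / lam\<^sup>2"
    using \<open>lam \<noteq> 0\<close> by (simp add: abs_le_square_iff power_mult_distrib field_simps)
  then have "\<bar>mu\<bar> * (1 / (2 * l\<^sup>2)) \<le> \<bar>mu\<bar> * (2 / lam\<^sup>2)"
    by (rule mult_left_mono) simp
  then have "(\<bar>mu\<bar> / (2 * l\<^sup>2) + 3 * (1 + \<bar>u\<bar>)\<^sup>2) * (1 + norm x) ^ 3
      \<le> (2 * \<bar>mu\<bar> / lam\<^sup>2 + 3 * (1 + \<bar>u\<bar>)\<^sup>2) * (1 + norm x) ^ 3"
    by (intro mult_right_mono) auto
  with abs_pi_phase_deriv_le show ?thesis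
    by (rule order_trans)
qed

lemma integrable_pi_moment:
  assumes "schwartz kappa" and "schwartz h"
    and [measurable]: "m \<in> borel_measurable borel" and m: "\<And>x. \<bar>m x\<bar> \<le> (1 + norm x) ^ k"
  shows "integrable lborel (\<lambda>x. m x * (kappa x * pi_kernel lam mu h u x))"
proof -
  note [measurable] = schwartz_measurable[OF assms(1)] schwartz_measurable[OF assms(2)]
  obtain Hb where Hb: "\<And>y. norm (h y) \<le> Hb"
    using schwartz_decay[OF assms(2), of 0] by auto
  show ?thesis
  proof (rule integrableI_schwartz_dominated[OF assms(1), where C=Hb and k=k])
    fix x
    have "norm (m x * (kappa x * pi_kernel lam mu h u x)) = \<bar>m x\<bar> * norm (kappa x) * norm (h (u - c1 x))"
      by (simp add: norm_mult norm_pi_kernel)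
    also have "\<dots> \<le> (1 + norm x) ^ k * norm (kappa x) * Hb"
      using m Hb by (intro mult_mono) auto
    finally show "norm (m x * (kappa x * pi_kernel lam mu h u x)) \<le> Hb * (1 + norm x) ^ k * norm (kappa x)"
      by (simp add: mult_ac)
  qed measurable
qed

lemma has_vector_derivative_piF:
  assumes "schwartz kappa" and "schwartz h" and "lam \<noteq> 0"
  shows "((\<lambda>l. piF l mu kappa h u) has_vector_derivative
           (\<integral>x. \<i> * pi_phase_deriv lam mu u x * (kappa x * pi_kernel lam mu h u x) \<partial>lborel)) (at lam)"
proof -
  note [measurable] = schwartz_measurable[OF assms(1)] schwartz_measurable[OF assms(2)]
  obtain Hb where Hb: "\<And>y. norm (h y) \<le> Hb"
    using schwartz_decay[OF assms(2), of 0] by auto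
  define K where "K = 2 * \<bar>mu\<bar> / lam\<^sup>2 + 3 * (1 + \<bar>u\<bar>)\<^sup>2"
  define G where "G x = Hb * K * (1 + norm x) ^ 3 * norm (kappa x)" for x
  have "((\<lambda>l. \<integral>x. kappa x * pi_kernel l mu h u x \<partial>lborel) has_vector_derivative
      (\<integral>x. \<i> * pi_phase_deriv lam mu u x * (kappa x * pi_kernel lam mu h u x) \<partial>lborel)) (at lam)"
  proof (rule has_vector_derivative_integral[where r="\<bar>lam\<bar> / 2" and G=G])
    show "\<bar>lam\<bar> / 2 > 0"
      using assms(3) by simp
    show "(\<lambda>x. kappa x * pi_kernel l mu h u x) \<in> borel_measurable lborel" for l
      by measurable
    show "(\<lambda>x. \<i> * pi_phase_deriv lam mu u x * (kappa x * pi_kernel lam mu h u x)) \<in> borel_measurable lborel"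
      unfolding pi_phase_deriv_def by measurable
    show "integrable lborel (\<lambda>x. kappa x * pi_kernel lam mu h u x)"
      using integrable_pi_moment[OF assms(1,2), where m="\<lambda>_. 1" and k=0] by simp
    show "integrable lborel G"
      unfolding G_def
      by (intro integrableI_schwartz_dominated[OF assms(1), where C="\<bar>Hb * K\<bar>" and k=3])
        (auto simp: abs_mult)
  next
    fix l x
    assume l: "\<bar>l - lam\<bar> < \<bar>lam\<bar> / 2"
    have "l \<noteq> 0"
      using l by auto
    then show "((\<lambda>l. kappa x * pi_kernel l mu h u x) has_vector_derivative
        \<i> * pi_phase_deriv l mu u x * (kappa x * pi_kernel l mu h u x)) (at l)"
      using has_vector_derivative_mult_right[OF has_vector_derivative_pi_kernel[of l mu h u x], where a="kappa x"]
      by (auto simp: mult_ac)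
    have pd: "\<bar>pi_phase_deriv l mu u x\<bar> \<le> K * (1 + norm x) ^ 3"
      unfolding K_def using assms(3) l by (rule abs_pi_phase_deriv_le_near)
    have "norm (\<i> * pi_phase_deriv l mu u x * (kappa x * pi_kernel l mu h u x))
        = \<bar>pi_phase_deriv l mu u x\<bar> * (norm (kappa x) * norm (h (u - c1 x)))"
      by (simp add: norm_mult norm_pi_kernel)
    also have "\<dots> \<le> (K * (1 + norm x) ^ 3) * (norm (kappa x) * Hb)"
      using pd Hb by (intro mult_mono mult_left_mono) auto
    also have "\<dots> = G x"
      by (simp add: G_def mult_ac)
    finally show "norm (\<i> * pi_phase_deriv l mu u x * (kappa x * pi_kernel l mu h u x)) \<le> G x" .
  qed
  then show ?thesis
    by (simp add: piF_eq_integral_pi_kernel)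
qed

lemma integral_pi_phase_deriv:
  assumes "schwartz kappa" and "schwartz h"
  shows "(\<integral>x. - pi_phase_deriv lam mu u x * (kappa x * pi_kernel lam mu h u x) \<partial>lborel) =
      piF lam mu (\<lambda>x. complex_of_real (c4 x) * kappa x) h u
    + complex_of_real (mu / (2 * lam^2) + u^2 / 2) * piF lam mu (\<lambda>x. complex_of_real (c2 x) * kappa x) h u
    - complex_of_real u * piF lam mu (\<lambda>x. complex_of_real (c3 x) * kappa x) h u
    + piF lam mu (\<lambda>x. complex_of_real (c3 x * c1 x) * kappa x) h u
    - complex_of_real u * piF lam mu (\<lambda>x. complex_of_real (c2 x * c1 x) * kappa x) h u
    + piF lam mu (\<lambda>x. complex_of_real (c2 x * (c1 x)^2) * kappa x) h u / 2"
proof -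
  define F where "F x = kappa x * pi_kernel lam mu h u x" for x
  have piF_moment: "piF lam mu (\<lambda>x. complex_of_real (m x) * kappa x) h u = (\<integral>x. m x * F x \<partial>lborel)" for m
    by (simp add: piF_eq_integral_pi_kernel F_def mult.assoc)
  have deg1: "\<bar>c1 x\<bar> \<le> 1 + norm x" "\<bar>c2 x\<bar> \<le> (1 + norm x) ^ 1"
    "\<bar>c3 x\<bar> \<le> (1 + norm x) ^ 1" "\<bar>c4 x\<bar> \<le> (1 + norm x) ^ 1" for x :: R4
    using abs_coord_le_norm[of x] by simp_all
  have deg2: "\<bar>c3 x * c1 x\<bar> \<le> (1 + norm x) ^ 2" "\<bar>c2 x * c1 x\<bar> \<le> (1 + norm x) ^ 2" for x
    unfolding abs_mult power2_eq_square using deg1[of x] by (auto intro: mult_mono)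
  have deg3: "\<bar>c2 x * (c1 x)\<^sup>2\<bar> \<le> (1 + norm x) ^ 3" for x
  proof -
    have "\<bar>(c1 x)\<^sup>2\<bar> \<le> (1 + norm x)\<^sup>2"
      using power_mono[OF deg1(1)[of x] abs_ge_zero, of 2] by simp
    then have "\<bar>c2 x\<bar> * \<bar>(c1 x)\<^sup>2\<bar> \<le> (1 + norm x) * (1 + norm x)\<^sup>2"
      using deg1(2)[of x] by (intro mult_mono) auto
    also have "\<dots> = (1 + norm x) ^ 3"
      by (simp add: power3_eq_cube power2_eq_square)
    finally show ?thesis
      by (simp only: abs_mult)
  qed
  note int = integrable_pi_moment[OF assms, where lam=lam and mu=mu and u=u, folded F_def]
  have "- pi_phase_deriv lam mu u x * F x =
        c4 x * F x + complex_of_real (mu / (2 * lam^2) + u^2 / 2) * (c2 x * F x)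
      - u * (c3 x * F x) + (c3 x * c1 x) * F x - u * ((c2 x * c1 x) * F x) + (c2 x * (c1 x)^2) * F x / 2" for x
    unfolding pi_phase_deriv_def by (simp add: field_simps power2_eq_square)
  then show ?thesis
    unfolding piF_moment F_def[symmetric]
    using int[OF _ deg1(4)] int[OF _ deg1(2)] int[OF _ deg1(3)] int[OF _ deg2(1)] int[OF _ deg2(2)] int[OF _ deg3]
    by simp
qed

theorem mainTheorem4:
  fixes kappa :: "real \<times> real \<times> real \<times> real \<Rightarrow> complex"
    and h :: "real \<Rightarrow> complex"
    and lam mu u :: real
  assumes "schwartz kappa" and "schwartz h" and "lam \<noteq> 0"
  shows "(\<lambda>l. piF l mu kappa h u) differentiable (at lam) \<and>
    piF lam mu (\<lambda>x. complex_of_real (c4 x) * kappa x) h u =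
        \<i> * vector_derivative (\<lambda>l. piF l mu kappa h u) (at lam)
      - complex_of_real (mu / (2 * lam^2) + u^2 / 2)
          * piF lam mu (\<lambda>x. complex_of_real (c2 x) * kappa x) h u
      + complex_of_real u * piF lam mu (\<lambda>x. complex_of_real (c3 x) * kappa x) h u
      - piF lam mu (\<lambda>x. complex_of_real (c3 x * c1 x) * kappa x) h u
      + complex_of_real u * piF lam mu (\<lambda>x. complex_of_real (c2 x * c1 x) * kappa x) h u
      - piF lam mu (\<lambda>x. complex_of_real (c2 x * (c1 x)^2) * kappa x) h u / 2"
proof -
  note D = has_vector_derivative_piF[OF assms, of mu u]
  have "\<i> * vector_derivative (\<lambda>l. piF l mu kappa h u) (at lam)
      = \<i> * (\<integral>x. \<i> * pi_phase_deriv lam mu u x * (kappa x * pi_kernel lam mu h u x) \<partial>lborel)"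
    by (simp add: vector_derivative_at[OF D])
  also have "\<dots> = (\<integral>x. \<i> * (\<i> * pi_phase_deriv lam mu u x * (kappa x * pi_kernel lam mu h u x)) \<partial>lborel)"
    by (rule integral_mult_right_zero[symmetric])
  also have "\<dots> = (\<integral>x. - pi_phase_deriv lam mu u x * (kappa x * pi_kernel lam mu h u x) \<partial>lborel)"
    by (simp add: mult.assoc)
  finally show ?thesis
    using differentiableI_vector[OF D]
    unfolding integral_pi_phase_deriv[OF assms(1,2)] by (simp add: algebra_simps)
qed

end
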